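(* Let $\Sigma=\{a,b\}$ and let $A,B,C$ be positive integers. For $w\in\mathbb{P}^\Sigma$ and $M\in[0..B]^\Sigma_\Sigma$ let $\mathrm{angle}(w,M)=w+M\mathbb{P}^\Sigma$. For $v\in\mathbb{P}^\Sigma$ let $$\mathrm{reg}(v)=\{u\in\mathbb{P}^\Sigma:\ \forall w\in[0;A]^\Sigma\ \forall M\in[0..B]^\Sigma_\Sigma\ \ (v\in\mathrm{angle}(w,M)\iff u\in\mathrm{angle}(w,M))\}.$$ Then for each $v\in\mathbb{N}^\Sigma$ there exists $v'\in\mathbb{N}^\Sigma$ such that $\|v'\|=O(AB^2+BC)$, $v'\in\mathrm{reg}(v)$, and $v-v'\in C\mathbb{Z}^\Sigma$; the implicit constant is absolute (independent of $A,B,C,v$).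
   Context: $\mathbb{P}$ denotes the set of non-negative rationals, $[0..B]=\{0,1,\ldots,B\}$, $[0;A]$ the set of rationals in the interval from $0$ to $A$. $[0..B]^\Sigma_\Sigma$ is the set of $\Sigma\times\Sigma$ matrices with entries in $[0..B]$; for a matrix $M$ with columns $M^x$ and $\lambda\in\mathbb{P}^\Sigma$, $M\lambda=\sum_x\lambda_xM^x$, and $M\mathbb{P}^\Sigma=\{M\lambda:\lambda\in\mathbb{P}^\Sigma\}$; $w+X=\{w+x:x\in X\}$. For $v\in\mathbb{Q}^\Sigma$, $\|v\|=\max_x|v(x)|$; $C\mathbb{Z}^\Sigma=\{Cz:z\in\mathbb{Z}^\Sigma\}$. *)

theory Defs
  imports Main "HOL.Rat"
begin

datatype sig = a | b

definition vnorm :: "(sig \<Rightarrow> rat) \<Rightarrow> rat" where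
  "vnorm v = max \<bar>v a\<bar> \<bar>v b\<bar>"

text \<open>M lambda = sum_x lambda_x M^x, where M^x is the column x, i.e. (M lambda)(y) = sum_x lambda_x M y x.\<close>
definition matvec :: "(sig \<Rightarrow> sig \<Rightarrow> nat) \<Rightarrow> (sig \<Rightarrow> rat) \<Rightarrow> (sig \<Rightarrow> rat)" where
  "matvec M l = (\<lambda>y. l a * of_nat (M y a) + l b * of_nat (M y b))"

definition angle :: "(sig \<Rightarrow> rat) \<Rightarrow> (sig \<Rightarrow> sig \<Rightarrow> nat) \<Rightarrow> (sig \<Rightarrow> rat) set" where
  "angle w M = {u. \<exists>l. (\<forall>x. 0 \<le> l x) \<and> u = (\<lambda>y. w y + matvec M l y)}"

definition reg :: "nat \<Rightarrow> nat \<Rightarrow> (sig \<Rightarrow> rat) \<Rightarrow> (sig \<Rightarrow> rat) set" where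
  "reg A B v = {u. (\<forall>x. 0 \<le> u x) \<and>
     (\<forall>w M. (\<forall>x. 0 \<le> w x \<and> w x \<le> of_nat A) \<longrightarrow> (\<forall>x y. M x y \<le> B) \<longrightarrow>
        (v \<in> angle w M \<longleftrightarrow> u \<in> angle w M))}"

end

theory Submission
  imports Defs
begin

text \<open>
  Membership of a vector \<open>v\<close> in \<open>angle(w, M)\<close> is decided by the signs of the coordinates
  of \<open>v - w\<close> and of the cross products \<open>c \<times> (v - w)\<close> with the two columns \<open>c\<close> of \<open>M\<close>.
  Since \<open>c \<times> w\<close> ranges over \<open>[-c\<^sub>b A, c\<^sub>a A]\<close>, these signs agree for \<open>v\<close> and \<open>v'\<close>
  whenever, for every \<open>c \<in> [0..B]\<^sup>2\<close>, the numbers \<open>c \<times> v\<close> and \<open>c \<times> v'\<close> are equal or lie beyond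
  the same end of that interval. To shrink \<open>v\<close> without leaving its class modulo \<open>C\<close>,
  subtract \<open>C u\<close> for the nonzero \<open>u \<in> [0..B]\<^sup>2\<close> minimising \<open>|u \<times> v|\<close>: if this breaks the
  condition for some \<open>c\<close>, the identity \<open>(c \<times> u) v = (c \<times> v) u - (u \<times> v) c\<close> together with
  \<open>|c \<times> u| \<ge> 1\<close> forces \<open>\<parallel>v\<parallel> \<le> 2AB\<^sup>2 + 2BC\<close>. Iterating gives the bound with constant 2.
\<close>

definition cross :: "(sig \<Rightarrow> 'a::comm_ring) \<Rightarrow> (sig \<Rightarrow> 'a) \<Rightarrow> 'a" where
  "cross u v = u a * v b - u b * v a"

definition cone2 :: "(sig \<Rightarrow> 'a::linordered_field) \<Rightarrow> (sig \<Rightarrow> 'a) \<Rightarrow> (sig \<Rightarrow> 'a) set" where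
  "cone2 m n = {x. \<exists>la lb. 0 \<le> la \<and> 0 \<le> lb \<and> (\<forall>y. x y = la * m y + lb * n y)}"

lemma all_sig_iff: "(\<forall>y. P y) \<longleftrightarrow> P a \<and> P b"
  by (metis sig.exhaust)

lemma ray_if_cross_eq_0:
  fixes m x :: "sig \<Rightarrow> 'a::linordered_field"
  assumes m: "\<forall>y. 0 \<le> m y" "m a \<noteq> 0 \<or> m b \<noteq> 0" and x: "\<forall>y. 0 \<le> x y" and "cross m x = 0"
  shows "\<exists>l\<ge>0. \<forall>y. x y = l * m y"
proof (cases "m a = 0")
  case True
  then have "x a = 0" using m assms(4) by (simp add: cross_def)
  then show ?thesis using True m x by (intro exI[of _ "x b / m b"]) (simp add: all_sig_iff)
next
  case False
  have "m a * x b = m b * x a" using assms(4) by (simp add: cross_def)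
  then have "x b = x a / m a * m b" using False by (simp add: field_simps)
  then show ?thesis using False m x by (intro exI[of _ "x a / m a"]) (simp add: all_sig_iff)
qed

lemma mem_cone2_iff:
  fixes m n x :: "sig \<Rightarrow> 'a::linordered_field"
  assumes m: "\<forall>y. 0 \<le> m y" and n: "\<forall>y. 0 \<le> n y"
  shows "x \<in> cone2 m n \<longleftrightarrow>
    (if cross m n = 0
     then (\<forall>y. 0 \<le> x y) \<and> cross m x = 0 \<and> cross n x = 0 \<and> ((\<forall>y. x y = 0) \<or> (\<exists>y. m y \<noteq> 0 \<or> n y \<noteq> 0))
     else 0 \<le> cross m x * cross m n \<and> cross n x * cross m n \<le> 0)"
  (is "_ \<longleftrightarrow> ?test")
proof
  assume "x \<in> cone2 m n"
  then obtain la lb where l: "0 \<le> la" "0 \<le> lb" "\<forall>y. x y = la * m y + lb * n y"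
    by (auto simp: cone2_def)
  have "cross m x = lb * cross m n" "cross n x = - (la * cross m n)"
    using l(3) by (simp_all add: cross_def algebra_simps)
  moreover have "\<forall>y. 0 \<le> x y" using l m n by simp
  moreover have "(\<forall>y. x y = 0) \<or> (\<exists>y. m y \<noteq> 0 \<or> n y \<noteq> 0)" using l(3) by auto
  ultimately show ?test
    using l(1,2) by (simp add: mult.assoc mult_nonneg_nonpos zero_le_mult_iff)
next
  assume test: ?test
  show "x \<in> cone2 m n"
  proof (cases "cross m n = 0")
    case True
    then have x: "\<forall>y. 0 \<le> x y" "cross m x = 0" "cross n x = 0"
      and nz: "(\<forall>y. x y = 0) \<or> (\<exists>y. m y \<noteq> 0 \<or> n y \<noteq> 0)" using test by auto
    from nz consider "\<forall>y. x y = 0" | "m a \<noteq> 0 \<or> m b \<noteq> 0" | "n a \<noteq> 0 \<or> n b \<noteq> 0"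
      by (metis sig.exhaust)
    then show ?thesis
    proof cases
      case 1 then show ?thesis by (auto simp: cone2_def intro!: exI[of _ 0])
    next
      case 2
      then obtain l where "0 \<le> l" "\<forall>y. x y = l * m y" using ray_if_cross_eq_0[OF m _ x(1,2)] by blast
      then show ?thesis unfolding cone2_def by (intro CollectI exI[of _ l] exI[of _ 0]) auto
    next
      case 3
      then obtain l where "0 \<le> l" "\<forall>y. x y = l * n y" using ray_if_cross_eq_0[OF n _ x(1,3)] by blast
      then show ?thesis unfolding cone2_def by (intro CollectI exI[of _ 0] exI[of _ l]) auto
    qed
  next
    case False
    define d where "d = cross m n"
    have la: "0 \<le> - cross n x / d" and lb: "0 \<le> cross m x / d"
      using test False by (auto simp: d_def zero_le_divide_iff divide_le_0_iff mult_le_0_iff zero_le_mult_iff)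
    have "x y * d = - cross n x * m y + cross m x * n y" for y
      by (cases y) (simp_all add: d_def cross_def algebra_simps)
    then have "x y = (- cross n x / d) * m y + (cross m x / d) * n y" for y
      using False by (simp add: d_def field_simps)
    then show ?thesis using la lb unfolding cone2_def by blast
  qed
qed

lemma sgn_eq_sgn_iff:
  fixes s t :: "'a::linordered_idom"
  shows "sgn s = sgn t \<longleftrightarrow> (0 < s \<longleftrightarrow> 0 < t) \<and> (s < 0 \<longleftrightarrow> t < 0)"
  by (auto simp: sgn_if)

lemma sgn_eq_imp_nonneg_iff:
  fixes s t :: "'a::linordered_idom"
  assumes "sgn s = sgn t"
  shows "0 \<le> s \<longleftrightarrow> 0 \<le> t"
  using assms by (auto simp: sgn_eq_sgn_iff le_less)

lemma mem_cone2_sgn_cong: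
  fixes m n x x' :: "sig \<Rightarrow> 'a::linordered_field"
  assumes m: "\<forall>y. 0 \<le> m y" and n: "\<forall>y. 0 \<le> n y"
    and x: "\<forall>y. sgn (x y) = sgn (x' y)"
    and sm: "sgn (cross m x) = sgn (cross m x')" and sn: "sgn (cross n x) = sgn (cross n x')"
  shows "x \<in> cone2 m n \<longleftrightarrow> x' \<in> cone2 m n"
proof -
  let ?d = "cross m n"
  have "0 \<le> cross m x * ?d \<longleftrightarrow> 0 \<le> cross m x' * ?d"
    by (rule sgn_eq_imp_nonneg_iff) (simp add: sgn_mult sm)
  moreover have "0 \<le> - (cross n x * ?d) \<longleftrightarrow> 0 \<le> - (cross n x' * ?d)"
    by (rule sgn_eq_imp_nonneg_iff) (simp add: sgn_mult sn)
  moreover have "0 \<le> x y \<longleftrightarrow> 0 \<le> x' y" "x y = 0 \<longleftrightarrow> x' y = 0" for y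
    using x sgn_eq_imp_nonneg_iff[of "x y" "x' y"] sgn_0_0[of "x y"] sgn_0_0[of "x' y"] by auto
  moreover have "cross m x = 0 \<longleftrightarrow> cross m x' = 0" "cross n x = 0 \<longleftrightarrow> cross n x' = 0"
    using sm sn sgn_0_0 by metis+
  ultimately show ?thesis
    unfolding mem_cone2_iff[OF m n] neg_0_le_iff_le by simp
qed

lemma mem_angle_iff_cone2:
  "u \<in> angle w M \<longleftrightarrow> (\<lambda>y. u y - w y) \<in> cone2 (\<lambda>y. of_nat (M y a)) (\<lambda>y. of_nat (M y b))"
proof
  assume "u \<in> angle w M"
  then obtain l where "\<forall>x. 0 \<le> l x" "u = (\<lambda>y. w y + matvec M l y)" unfolding angle_def by blast
  then show "(\<lambda>y. u y - w y) \<in> cone2 (\<lambda>y. of_nat (M y a)) (\<lambda>y. of_nat (M y b))"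
    unfolding cone2_def matvec_def by (intro CollectI exI[of _ "l a"] exI[of _ "l b"]) auto
next
  assume "(\<lambda>y. u y - w y) \<in> cone2 (\<lambda>y. of_nat (M y a)) (\<lambda>y. of_nat (M y b))"
  then obtain la lb where l: "0 \<le> la" "0 \<le> lb" "\<forall>y. u y - w y = la * of_nat (M y a) + lb * of_nat (M y b)"
    unfolding cone2_def by blast
  define l where "l y = (case y of a \<Rightarrow> la | b \<Rightarrow> lb)" for y
  have "\<forall>x. 0 \<le> l x" using l by (simp add: l_def split: sig.split)
  moreover have "u = (\<lambda>y. w y + matvec M l y)"
    using l(3) by (auto simp: matvec_def l_def algebra_simps)
  ultimately show "u \<in> angle w M" unfolding angle_def by blast
qed

text \<open>\<open>F - t\<close> and \<open>G - t\<close> have the same sign for every \<open>t \<in> [-c\<^sub>b A, c\<^sub>a A]\<close>, the range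
  of \<open>cross c w\<close> over \<open>w \<in> [0;A]\<^sup>2\<close>.\<close>
definition sign_stable :: "'a::linordered_idom \<Rightarrow> (sig \<Rightarrow> 'a) \<Rightarrow> 'a \<Rightarrow> 'a \<Rightarrow> bool" where
  "sign_stable A c F G \<longleftrightarrow>
     F = G \<or> (c a * A < F \<and> c a * A < G) \<or> (F < - (c b * A) \<and> G < - (c b * A))"

lemma sgn_cross_diff_eq_if_sign_stable:
  fixes c v v' w :: "sig \<Rightarrow> 'a::linordered_idom"
  assumes stable: "sign_stable A c (cross c v) (cross c v')"
    and c: "\<forall>y. 0 \<le> c y" and w: "\<forall>y. 0 \<le> w y \<and> w y \<le> A"
  shows "sgn (cross c (\<lambda>y. v y - w y)) = sgn (cross c (\<lambda>y. v' y - w y))"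
proof -
  have "c a * w b \<le> c a * A" "c b * w a \<le> c b * A" "0 \<le> c a * w b" "0 \<le> c b * w a"
    using c w by (simp_all add: mult_left_mono)
  then have t: "- (c b * A) \<le> cross c w" "cross c w \<le> c a * A" by (simp_all add: cross_def)
  have shift: "cross c (\<lambda>y. u y - w y) = cross c u - cross c w" for u
    by (simp add: cross_def algebra_simps)
  from stable consider "cross c v = cross c v'" | "c a * A < cross c v" "c a * A < cross c v'"
    | "cross c v < - (c b * A)" "cross c v' < - (c b * A)"
    unfolding sign_stable_def by blast
  then show ?thesis
    unfolding shift using t by cases simp_all
qed

lemma of_int_cross: "cross (\<lambda>y. of_int (u y)) (\<lambda>y. of_int (v y)) = of_int (cross u v)"
  by (simp add: cross_def)

lemma sign_stable_of_int:
  "sign_stable (of_int A :: 'a::linordered_idom) (\<lambda>y. of_int (c y)) (of_int F) (of_int G)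
     \<longleftrightarrow> sign_stable A c F G"
  unfolding sign_stable_def by (simp flip: of_int_mult of_int_minus)

definition cross_equiv :: "'a::linordered_idom \<Rightarrow> 'a \<Rightarrow> (sig \<Rightarrow> 'a) \<Rightarrow> (sig \<Rightarrow> 'a) \<Rightarrow> bool" where
  "cross_equiv A B v v' \<longleftrightarrow>
     (\<forall>c. (\<forall>y. 0 \<le> c y \<and> c y \<le> B) \<longrightarrow> sign_stable A c (cross c v) (cross c v'))"

lemma mem_reg_if_cross_equiv:
  fixes v v' :: "sig \<Rightarrow> int"
  assumes equiv: "cross_equiv (int A) (int B) v v'" and "0 < B" and v': "\<forall>y. 0 \<le> v' y"
  shows "(\<lambda>y. of_int (v' y)) \<in> reg A B (\<lambda>y. of_int (v y))"
  unfolding reg_def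
proof (intro CollectI conjI allI impI)
  fix w :: "sig \<Rightarrow> rat" and M :: "sig \<Rightarrow> sig \<Rightarrow> nat"
  assume w: "\<forall>y. 0 \<le> w y \<and> w y \<le> of_nat A" and M: "\<forall>x y. M x y \<le> B"
  define x where "x y = of_int (v y) - w y" for y
  define x' where "x' y = of_int (v' y) - w y" for y
  have sgn_cross: "sgn (cross (\<lambda>y. of_int (c y)) x) = sgn (cross (\<lambda>y. of_int (c y)) x')"
    if "\<forall>y. 0 \<le> c y \<and> c y \<le> int B" for c
  proof -
    have "sign_stable (int A) c (cross c v) (cross c v')" using equiv that by (simp add: cross_equiv_def)
    then have "sign_stable (of_nat A) (\<lambda>y. of_int (c y))
        (cross (\<lambda>y. of_int (c y)) (\<lambda>y. of_int (v y))) (cross (\<lambda>y. of_int (c y)) (\<lambda>y. of_int (v' y)) :: rat)"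
      unfolding of_int_cross by (metis of_int_of_nat_eq sign_stable_of_int)
    then show ?thesis
      unfolding x_def x'_def using that w by (intro sgn_cross_diff_eq_if_sign_stable) auto
  qed
  have "sgn (x b) = sgn (x' b)"
    using sgn_cross[of "\<lambda>y. if y = a then 1 else 0"] \<open>0 < B\<close> by (simp add: cross_def)
  moreover have "sgn (x a) = sgn (x' a)"
    using sgn_cross[of "\<lambda>y. if y = b then 1 else 0"] \<open>0 < B\<close> by (simp add: cross_def)
  moreover have "sgn (cross (\<lambda>y. of_nat (M y z)) x) = sgn (cross (\<lambda>y. of_nat (M y z)) x')" for z
    using sgn_cross[of "\<lambda>y. int (M y z)"] M by simp
  ultimately show "(\<lambda>y. of_int (v y)) \<in> angle w M \<longleftrightarrow> (\<lambda>y. of_int (v' y)) \<in> angle w M"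
    unfolding mem_angle_iff_cone2 x_def[symmetric] x'_def[symmetric]
    by (intro mem_cone2_sgn_cong) (auto simp: all_sig_iff)
qed (use v' in simp)

lemma sign_stable_trans:
  assumes "0 \<le> A" "\<forall>y. 0 \<le> c y" "sign_stable A c F G" "sign_stable A c G H"
  shows "sign_stable A c F H"
proof -
  have "0 \<le> c a * A" "0 \<le> c b * A" using assms(1,2) by simp_all
  then show ?thesis using assms(3,4) unfolding sign_stable_def by auto
qed

lemma cross_equiv_refl: "cross_equiv A B v v"
  by (simp add: cross_equiv_def sign_stable_def)

lemma cross_equiv_trans:
  assumes "0 \<le> A" "cross_equiv A B u v" "cross_equiv A B v w"
  shows "cross_equiv A B u w"
  using assms sign_stable_trans[OF \<open>0 \<le> A\<close>] unfolding cross_equiv_def by blast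

lemma cross_equiv_nonneg:
  assumes equiv: "cross_equiv A B v v'" and "0 \<le> A" "1 \<le> B" and v: "\<forall>y. 0 \<le> v y"
  shows "\<forall>y. 0 \<le> v' y"
proof -
  have unit: "sign_stable A e (cross e v) (cross e v')" if "e = (\<lambda>z. if z = x then 1 else 0)" for e x
    using equiv \<open>1 \<le> B\<close> that unfolding cross_equiv_def by simp
  have "sign_stable A (\<lambda>z. if z = a then 1 else 0) (v b) (v' b)"
    using unit[OF refl, of a] by (simp add: cross_def)
  moreover have "sign_stable A (\<lambda>z. if z = b then 1 else 0) (- v a) (- v' a)"
    using unit[OF refl, of b] by (simp add: cross_def)
  ultimately show ?thesis
    using v \<open>0 \<le> A\<close> unfolding sign_stable_def all_sig_iff by auto
qed

lemma cross_mult_eq: "cross c u * v y = cross c v * u y - cross u v * c y"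
  by (cases y) (simp_all add: cross_def algebra_simps)

lemma not_sign_stable_diff:
  assumes "0 \<le> A" and c: "\<forall>y. 0 \<le> c y \<and> c y \<le> B" and "\<not> sign_stable A c F (F - d)"
  shows "d \<noteq> 0 \<and> \<bar>F\<bar> \<le> A * B + \<bar>d\<bar>"
proof -
  have bound: "c y * A \<le> A * B" "0 \<le> c y * A" for y
    using c \<open>0 \<le> A\<close> mult_right_mono[of "c y" B A] by (simp_all add: mult.commute)
  have "d \<noteq> 0" "F \<le> c a * A \<or> F - d \<le> c a * A" "- (c b * A) \<le> F \<or> - (c b * A) \<le> F - d"
    using assms(3) unfolding sign_stable_def by auto
  then show ?thesis
    using bound[of a] bound[of b] abs_ge_self[of d] abs_ge_minus_self[of d]
    unfolding abs_le_iff by auto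
qed

lemma coord_bound_if_cross_min:
  fixes A B C :: int and c u v :: "sig \<Rightarrow> int"
  assumes "0 \<le> A" and c: "\<forall>y. 0 \<le> c y \<and> c y \<le> B" and u: "\<forall>y. 0 \<le> u y \<and> u y \<le> B"
    and min: "\<bar>cross u v\<bar> \<le> \<bar>cross c v\<bar>"
    and d: "cross c u \<noteq> 0" and F: "\<bar>cross c v\<bar> \<le> A * B + C * \<bar>cross c u\<bar>"
  shows "\<bar>v y\<bar> \<le> 2 * A * B^2 + 2 * B * C"
proof -
  define F where "F = \<bar>cross c v\<bar>"
  define d where "d = \<bar>cross c u\<bar>"
  have "0 \<le> B" using c[rule_format, of a] by linarith
  have "\<bar>cross c v * u y\<bar> \<le> B * F"
    using u[rule_format, of y] mult_right_mono[of "u y" B F] by (simp add: F_def abs_mult mult.commute)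
  moreover have "\<bar>cross u v * c y\<bar> \<le> B * F"
    using c[rule_format, of y] min mult_mono[of "c y" B "\<bar>cross u v\<bar>" F]
    by (simp add: F_def abs_mult mult.commute)
  ultimately have "d * \<bar>v y\<bar> \<le> 2 * (B * F)"
    using abs_triangle_ineq4[of "cross c v * u y" "cross u v * c y"]
    unfolding d_def abs_mult[symmetric] cross_mult_eq[of c u v y] by linarith
  also have "\<dots> \<le> 2 * (B * (A * B + C * d))"
    using F \<open>0 \<le> B\<close> by (simp add: F_def d_def mult_left_mono)
  also have "\<dots> = 2 * A * B^2 + 2 * B * C * d"
    by (simp add: power2_eq_square algebra_simps)
  also have "\<dots> \<le> d * (2 * A * B^2 + 2 * B * C)"
    using \<open>0 \<le> A\<close> \<open>0 \<le> B\<close> d mult_left_mono[of 1 d "2 * A * B^2"]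
    by (simp add: d_def algebra_simps)
  finally show ?thesis
    using d by (simp add: d_def)
qed

lemma exists_shift_cross_equiv:
  fixes A B C :: int and v :: "sig \<Rightarrow> int"
  assumes "0 \<le> A" "0 < B" "0 \<le> C" and large: "2 * A * B^2 + 2 * B * C < \<bar>v z\<bar>"
  shows "\<exists>u. (\<forall>y. 0 \<le> u y \<and> u y \<le> B) \<and> (\<exists>y. u y \<noteq> 0) \<and>
           cross_equiv A B v (\<lambda>y. v y - C * u y)"
proof -
  define box where "box u \<longleftrightarrow> (\<forall>y. 0 \<le> u y \<and> u y \<le> B) \<and> (\<exists>y. u y \<noteq> 0)" for u :: "sig \<Rightarrow> int"
  have "box (\<lambda>_. 1)" using \<open>0 < B\<close> by (simp add: box_def)
  then obtain u where "box u" and min: "\<And>c. box c \<Longrightarrow> nat \<bar>cross u v\<bar> \<le> nat \<bar>cross c v\<bar>"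
    using ex_has_least_nat[of box _ "\<lambda>u. nat \<bar>cross u v\<bar>"] by blast
  then have u: "\<forall>y. 0 \<le> u y \<and> u y \<le> B" by (simp add: box_def)
  have "sign_stable A c (cross c v) (cross c (\<lambda>y. v y - C * u y))"
    if c: "\<forall>y. 0 \<le> c y \<and> c y \<le> B" for c
  proof (cases "\<forall>y. c y = 0")
    case True
    then show ?thesis by (simp add: cross_def sign_stable_def)
  next
    case False
    then have "\<bar>cross u v\<bar> \<le> \<bar>cross c v\<bar>" using min[of c] c by (simp add: box_def)
    have shift: "cross c (\<lambda>y. v y - C * u y) = cross c v - C * cross c u"
      by (simp add: cross_def algebra_simps)
    show ?thesis
    proof (rule ccontr)
      assume "\<not> ?thesis"
      then have "C * cross c u \<noteq> 0 \<and> \<bar>cross c v\<bar> \<le> A * B + \<bar>C * cross c u\<bar>"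
        unfolding shift by (rule not_sign_stable_diff[OF \<open>0 \<le> A\<close> c])
      then have "cross c u \<noteq> 0" "\<bar>cross c v\<bar> \<le> A * B + C * \<bar>cross c u\<bar>"
        using \<open>0 \<le> C\<close> by (simp_all add: abs_mult)
      then have "\<bar>v z\<bar> \<le> 2 * A * B^2 + 2 * B * C"
        using coord_bound_if_cross_min[OF \<open>0 \<le> A\<close> c u \<open>\<bar>cross u v\<bar> \<le> \<bar>cross c v\<bar>\<close>] by blast
      with large show False by simp
    qed
  qed
  then show ?thesis using \<open>box u\<close> unfolding box_def cross_equiv_def by blast
qed

lemma exists_small_cross_equiv:
  fixes A B C :: int and v :: "sig \<Rightarrow> int"
  assumes "0 \<le> A" "0 < B" "0 < C" and "\<forall>y. 0 \<le> v y"
  shows "\<exists>v'. (\<forall>y. 0 \<le> v' y \<and> v' y \<le> 2 * A * B^2 + 2 * B * C) \<and>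
           cross_equiv A B v v' \<and> (\<forall>y. C dvd v y - v' y)"
  using assms(4)
proof (induction "nat (v a + v b)" arbitrary: v rule: less_induct)
  case less
  show ?case
  proof (cases "\<forall>y. v y \<le> 2 * A * B^2 + 2 * B * C")
    case True
    then show ?thesis using less.prems cross_equiv_refl by (intro exI[of _ v]) simp
  next
    case False
    then obtain z where "2 * A * B^2 + 2 * B * C < v z" by (auto simp: not_le)
    then have "2 * A * B^2 + 2 * B * C < \<bar>v z\<bar>" by linarith
    then obtain u where u: "\<forall>y. 0 \<le> u y \<and> u y \<le> B" "\<exists>y. u y \<noteq> 0"
      and equiv: "cross_equiv A B v (\<lambda>y. v y - C * u y)"
      using exists_shift_cross_equiv[OF \<open>0 \<le> A\<close> \<open>0 < B\<close>] \<open>0 < C\<close> by (meson less_imp_le)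
    have nonneg: "\<forall>y. 0 \<le> v y - C * u y"
      using cross_equiv_nonneg[OF equiv \<open>0 \<le> A\<close>] \<open>0 < B\<close> less.prems by simp
    have "0 < u a + u b"
      using u(1)[rule_format, of a] u(1)[rule_format, of b] u(2)
      by (metis add_nonneg_pos add_pos_nonneg le_less sig.exhaust)
    then have "0 < C * u a + C * u b"
      using \<open>0 < C\<close> by (metis distrib_left mult_pos_pos)
    then have "nat ((v a - C * u a) + (v b - C * u b)) < nat (v a + v b)"
      using nonneg by (simp add: all_sig_iff)
    then obtain v' where v': "\<forall>y. 0 \<le> v' y \<and> v' y \<le> 2 * A * B^2 + 2 * B * C"
        "cross_equiv A B (\<lambda>y. v y - C * u y) v'" "\<forall>y. C dvd (v y - C * u y) - v' y"
      using less.hyps[of "\<lambda>y. v y - C * u y"] nonneg by auto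
    have "v y - v' y = C * u y + ((v y - C * u y) - v' y)" for y by simp
    then have "\<forall>y. C dvd v y - v' y" using v'(3) by (metis dvd_add dvd_triv_left)
    then show ?thesis
      using v'(1) cross_equiv_trans[OF \<open>0 \<le> A\<close> equiv v'(2)] by blast
  qed
qed

theorem lemma3:
  shows "\<exists>K::rat. \<forall>A B C :: nat. A > 0 \<longrightarrow> B > 0 \<longrightarrow> C > 0 \<longrightarrow>
    (\<forall>v :: sig \<Rightarrow> nat. \<exists>v' :: sig \<Rightarrow> nat.
       vnorm (\<lambda>x. of_nat (v' x)) \<le> K * of_nat (A * B^2 + B * C) \<and>
       (\<lambda>x. of_nat (v' x)) \<in> reg A B (\<lambda>x. of_nat (v x)) \<and>
       (\<forall>x. int C dvd (int (v x) - int (v' x))))"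
proof (intro exI[of _ 2] allI impI)
  fix A B C :: nat and v :: "sig \<Rightarrow> nat"
  assume "A > 0" "B > 0" "C > 0"
  then obtain v' where v': "\<forall>y. 0 \<le> v' y \<and> v' y \<le> 2 * int A * int B^2 + 2 * int B * int C"
      "cross_equiv (int A) (int B) (\<lambda>y. int (v y)) v'" "\<forall>y. int C dvd int (v y) - v' y"
    using exists_small_cross_equiv[of "int A" "int B" "int C" "\<lambda>y. int (v y)"] by auto
  have cast: "of_nat (nat (v' y)) = (of_int (v' y) :: rat)" "int (nat (v' y)) = v' y" for y
    using v'(1) by simp_all
  have "of_int (v' y) \<le> (2 * of_nat (A * B^2 + B * C) :: rat)" for y
    using v'(1) of_int_le_iff[of "v' y" "2 * int (A * B^2 + B * C)", where 'a=rat]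
    by (simp add: algebra_simps)
  then have "vnorm (\<lambda>y. of_nat (nat (v' y))) \<le> 2 * of_nat (A * B^2 + B * C)"
    using v'(1) by (simp add: vnorm_def cast)
  moreover have "(\<lambda>y. of_nat (nat (v' y))) \<in> reg A B (\<lambda>y. of_nat (v y))"
    using mem_reg_if_cross_equiv[OF v'(2) \<open>B > 0\<close>] v'(1) by (simp add: cast)
  moreover have "\<forall>y. int C dvd int (v y) - int (nat (v' y))"
    unfolding cast using v'(3) .
  ultimately show "\<exists>v''. vnorm (\<lambda>x. of_nat (v'' x)) \<le> 2 * of_nat (A * B^2 + B * C) \<and>
       (\<lambda>x. of_nat (v'' x)) \<in> reg A B (\<lambda>x. of_nat (v x)) \<and>
       (\<forall>x. int C dvd (int (v x) - int (v'' x)))"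
    by (intro exI[of _ "\<lambda>y. nat (v' y)"]) blast
qed

end
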